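(* Let $Y$ be a $\mathbb{Q}$-vector space, let $f:\mathbb{R}\to Y$, let $s\ge 1$ and $\delta>0$, and let $I=(-\delta,0)$. If $\Delta_h^sf(x)=0$ for all $x\in\mathbb{R}$ and all $h\in I$, then $\Delta_{h_1h_2\cdots h_s}f(x)=0$ for all $(x,h_1,\dots,h_s)\in\mathbb{R}^{s+1}$. The same conclusion holds if instead the hypothesis is assumed for all $h\in(0,\delta)$.
   Context: For $f:X\to Y$ between $\mathbb{Q}$-vector spaces and $h\in X$, $\Delta_hf(x)=f(x+h)-f(x)$; iterated differences are $\Delta_{h_1h_2\cdots h_s}f(x)=\Delta_{h_1}\left(\Delta_{h_2\cdots h_s}f\right)(x)$; and $\Delta_h^sf(x)=\sum_{k=0}^s\binom{s}{k}(-1)^{s-k}f(x+kh)$ (i.e. $\Delta_{h_1\cdots h_s}f(x)$ with $h_1=\cdots=h_s=h$). *)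

theory Defs
  imports Main "HOL-Analysis.Analysis"
begin

definition fdiff :: "'a::ab_group_add \<Rightarrow> ('a \<Rightarrow> 'b::ab_group_add) \<Rightarrow> 'a \<Rightarrow> 'b" where
  "fdiff h f x = f (x + h) - f x"

fun idiff :: "'a::ab_group_add list \<Rightarrow> ('a \<Rightarrow> 'b::ab_group_add) \<Rightarrow> 'a \<Rightarrow> 'b" where
  "idiff [] f = f"
| "idiff (h # hs) f = fdiff h (idiff hs f)"

definition pdiff :: "(rat \<Rightarrow> 'b \<Rightarrow> 'b::ab_group_add) \<Rightarrow> nat \<Rightarrow> real \<Rightarrow> (real \<Rightarrow> 'b) \<Rightarrow> real \<Rightarrow> 'b" where
  "pdiff sc s h f x =
     (\<Sum>k\<in>{0..s}. sc (of_int ((s choose k) * (-1) ^ (s - k))) (f (x + real k * h)))"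

end

theory Submission
  imports Defs
begin

(*
  Since D_(a+b) = D_a + D_b + D_a D_b for the difference operators, the vanishing of all
  differences of order at least n with directions in a set H propagates to directions in the
  additive monoid generated by H. For H = {h} this turns D_h^s f = 0 for h in (0, delta) into
  D_h^s f = 0 for all h >= 0, and D_(-h)^s f (x) = +-D_h^s f (x - s h) covers h < 0.

  To pass from pure powers to mixed differences with directions h_1, ..., h_s, let H be the
  set of these directions and M the monoid it generates. By pigeonhole every difference of
  order |H| s + 1 with directions in H contains some direction s times, hence vanishes. Now
  descend in the order d >= s: if all differences of order d + 1 with directions in M vanish,
  then (k_1, ..., k_d) |-> D_(k_1 ... k_d) f (y) is symmetric and additive in each slot on M,
  so the d-th difference of e |-> D_e^d f (y) in the directions k_i equals
  d! D_(k_1 ... k_d) f (y). The left-hand side is 0, and d! is invertible because Y is a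
  vector space over the rationals.
*)

lemma fdiff_commute: "fdiff a (fdiff b f) = fdiff b (fdiff a f)"
  by (rule ext) (simp add: fdiff_def algebra_simps)

lemma idiff_conv_fold: "idiff hs = fold fdiff (rev hs)"
proof -
  have "idiff hs f = fold fdiff (rev hs) f" for f
    by (induction hs) simp_all
  then show ?thesis ..
qed

lemma idiff_perm:
  assumes "mset hs = mset ks"
  shows "idiff hs f x = idiff ks f x"
  unfolding idiff_conv_fold
  by (subst fold_multiset_equiv[of "rev hs" fdiff "rev ks"])
    (simp_all add: assms fun_eq_iff fdiff_commute)

lemma idiff_append: "idiff (hs @ ks) f = idiff hs (idiff ks f)"
  by (induction hs) simp_all

lemma idiff_Cons_eq_idiff_fdiff: "idiff (h # hs) f = idiff hs (fdiff h f)"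
proof -
  have "idiff (h # hs) f x = idiff (hs @ [h]) f x" for x
    by (rule idiff_perm) simp
  then show ?thesis by (simp add: idiff_append fun_eq_iff)
qed

lemma idiff_zero [simp]: "idiff hs (\<lambda>_. 0) = (\<lambda>_. 0)"
  by (induction hs) (simp_all add: fdiff_def)

lemma fdiff_zero [simp]: "fdiff 0 f = (\<lambda>_. 0)"
  by (simp add: fdiff_def fun_eq_iff)

lemma idiff_sum: "idiff hs (\<lambda>y. \<Sum>i\<in>A. g i y) x = (\<Sum>i\<in>A. idiff hs (g i) x)"
  by (induction hs arbitrary: x) (simp_all add: fdiff_def sum_subtractf)

lemma idiff_Cons_add:
  "idiff ((a + b) # hs) f x = idiff (a # hs) f x + idiff (b # hs) f x + idiff (a # b # hs) f x"
  by (simp add: fdiff_def algebra_simps)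

lemma idiff_map_uminus:
  "idiff (map uminus hs) f x =
     (if even (length hs) then idiff hs f (x - sum_list hs) else - idiff hs f (x - sum_list hs))"
  by (induction hs arbitrary: x) (auto simp: fdiff_def algebra_simps)

lemma pdiff_Suc:
  assumes "vector_space sc"
  shows "pdiff sc (Suc s) h f x = pdiff sc s h f (x + h) - pdiff sc s h f x"
proof -
  interpret vector_space sc by fact
  define c :: "nat \<Rightarrow> nat \<Rightarrow> rat"
    where "c n k = of_int (int (n choose k) * (-1) ^ (n - k))" for n k
  define g where "g k = f (x + real k * h)" for k
  have pdiff_c: "pdiff sc n h f y = (\<Sum>k=0..n. sc (c n k) (f (y + real k * h)))" for n y
    by (simp add: pdiff_def c_def)
  have pascal: "c (Suc s) (Suc k) = c s k - c s (Suc k)" for k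
  proof (cases "k < s")
    case True
    then have "s - k = Suc (s - Suc k)" by simp
    then show ?thesis by (simp add: c_def algebra_simps)
  qed (simp add: c_def)
  have c0: "c (Suc s) 0 = - c s 0"
    by (simp add: c_def)
  have "pdiff sc (Suc s) h f x = (\<Sum>k=0..Suc s. sc (c (Suc s) k) (g k))"
    by (simp add: pdiff_c g_def)
  also have "\<dots> = sc (c (Suc s) 0) (g 0) + (\<Sum>k=0..s. sc (c (Suc s) (Suc k)) (g (Suc k)))"
    by (simp only: sum.atLeast0_atMost_Suc_shift comp_def)
  also have "\<dots> = (\<Sum>k=0..s. sc (c s k) (g (Suc k))) -
      (sc (c s 0) (g 0) + (\<Sum>k=0..s. sc (c s (Suc k)) (g (Suc k))))"
    by (simp add: pascal c0 scale_left_diff_distrib sum_subtractf)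
  also have "(\<Sum>k=0..s. sc (c s k) (g (Suc k))) = pdiff sc s h f (x + h)"
    by (simp add: pdiff_c g_def algebra_simps)
  also have "sc (c s 0) (g 0) + (\<Sum>k=0..s. sc (c s (Suc k)) (g (Suc k))) =
      (\<Sum>k=0..Suc s. sc (c s k) (g k))"
    by (simp only: sum.atLeast0_atMost_Suc_shift comp_def)
  also have "\<dots> = pdiff sc s h f x"
    by (simp add: pdiff_c g_def c_def)
  finally show ?thesis .
qed

lemma pdiff_eq_idiff:
  assumes "vector_space sc"
  shows "pdiff sc s h f x = idiff (replicate s h) f x"
proof (induction s arbitrary: x)
  case 0
  interpret vector_space sc by fact
  show ?case by (simp add: pdiff_def)
next
  case (Suc s)
  then show ?case by (simp add: pdiff_Suc[OF assms] fdiff_def)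
qed

definition diffs_vanish :: "'a::ab_group_add set \<Rightarrow> nat \<Rightarrow> ('a \<Rightarrow> 'b::ab_group_add) \<Rightarrow> bool" where
  "diffs_vanish D n f \<longleftrightarrow> (\<forall>hs x. set hs \<subseteq> D \<longrightarrow> length hs = n \<longrightarrow> idiff hs f x = 0)"

lemma diffs_vanishD: "diffs_vanish D n f \<Longrightarrow> set hs \<subseteq> D \<Longrightarrow> length hs = n \<Longrightarrow> idiff hs f x = 0"
  by (simp add: diffs_vanish_def)

lemma diffs_vanish_subset: "diffs_vanish E n f \<Longrightarrow> D \<subseteq> E \<Longrightarrow> diffs_vanish D n f"
  by (auto simp: diffs_vanish_def)

lemma diffs_vanish_le:
  assumes "diffs_vanish D n f" "set hs \<subseteq> D" "n \<le> length hs"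
  shows "idiff hs f x = 0"
proof -
  let ?m = "length hs - n"
  have "idiff (drop ?m hs) f = (\<lambda>_. 0)"
    using assms set_drop_subset[of ?m hs] by (intro ext diffs_vanishD[OF assms(1)]) auto
  moreover have "idiff hs f = idiff (take ?m hs) (idiff (drop ?m hs) f)"
    by (simp flip: idiff_append)
  ultimately show ?thesis by simp
qed

lemma diffs_vanish_fdiff:
  assumes "diffs_vanish D (Suc n) f" "h \<in> D"
  shows "diffs_vanish D n (fdiff h f)"
  unfolding diffs_vanish_def
proof (intro allI impI)
  fix hs x assume "set hs \<subseteq> D" "length hs = n"
  then have "idiff (h # hs) f x = 0"
    using assms by (intro diffs_vanishD) auto
  then show "idiff hs (fdiff h f) x = 0"
    by (simp only: idiff_Cons_eq_idiff_fdiff)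
qed

lemma diffs_vanish_singleton: "diffs_vanish {h} n f \<longleftrightarrow> (\<forall>x. idiff (replicate n h) f x = 0)"
proof -
  have "set hs \<subseteq> {h} \<and> length hs = n \<longleftrightarrow> hs = replicate n h" for hs
    by (auto simp: subset_singleton_iff) (metis replicate_length_same singletonD)
  then show ?thesis
    unfolding diffs_vanish_def by (simp flip: imp_conjL)
qed

lemma diffs_vanish_uminus:
  assumes "diffs_vanish D n f"
  shows "diffs_vanish (uminus ` D) n f"
  unfolding diffs_vanish_def
proof (intro allI impI)
  fix hs x assume "set hs \<subseteq> uminus ` D" "length hs = n"
  then have "idiff (map uminus hs) f y = 0" for y
    using assms by (intro diffs_vanishD) auto
  then show "idiff hs f x = 0"
    using idiff_map_uminus[of "map uminus hs" f x] by (simp add: comp_def split: if_splits)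
qed

inductive_set sums_of :: "'a::comm_monoid_add set \<Rightarrow> 'a set" for H where
  zero: "0 \<in> sums_of H"
| add: "h \<in> H \<Longrightarrow> k \<in> sums_of H \<Longrightarrow> h + k \<in> sums_of H"

lemma sums_of_add_closed: "a \<in> sums_of H \<Longrightarrow> b \<in> sums_of H \<Longrightarrow> a + b \<in> sums_of H"
  by (induction a rule: sums_of.induct) (simp_all add: add.assoc sums_of.add)

lemma subset_sums_of: "H \<subseteq> sums_of H"
  using sums_of.add[OF _ sums_of.zero] by auto

lemma of_nat_mult_in_sums_of: "of_nat n * h \<in> sums_of {h}"
  by (induction n) (simp_all add: sums_of.zero sums_of.add algebra_simps)

lemma diffs_vanish_sums_of:
  assumes vanish: "diffs_vanish H n f"
  shows "diffs_vanish (sums_of H) n f"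
proof -
  have "idiff (ks @ hs) f x = 0"
    if "set ks \<subseteq> sums_of H" "set hs \<subseteq> H" "n \<le> length ks + length hs" for ks hs x
    using that
  proof (induction ks arbitrary: hs x)
    case Nil
    then show ?case using diffs_vanish_le[OF vanish] by simp
  next
    case (Cons k ks)
    from Cons.prems(1) have "k \<in> sums_of H" "set ks \<subseteq> sums_of H" by simp_all
    then show ?case using Cons.prems(2,3)
    proof (induction k arbitrary: hs x rule: sums_of.induct)
      case zero
      then show ?case by simp
    next
      case (add h k)
      have "idiff (h # ks @ hs) f x = idiff (ks @ h # hs) f x"
        by (rule idiff_perm) simp
      also have "\<dots> = 0" using Cons.IH add.hyps(1) add.prems by simp
      finally have h_part: "idiff (h # ks @ hs) f x = 0" .
      have "idiff (h # k # ks @ hs) f x = idiff (k # ks @ h # hs) f x"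
        by (rule idiff_perm) simp
      also have "\<dots> = 0" using add.IH add.hyps(1) add.prems by simp
      finally have mixed_part: "idiff (h # k # ks @ hs) f x = 0" .
      have "idiff (k # ks @ hs) f x = 0" using add.IH add.prems by simp
      then show ?case using idiff_Cons_add[of h k "ks @ hs" f x] h_part mixed_part by simp
    qed
  qed
  from this[where hs = "[]"] show ?thesis by (simp add: diffs_vanish_def)
qed

lemma idiff_cong_sums_of:
  assumes "\<And>y. y \<in> sums_of H \<Longrightarrow> g y = g' y" "set hs \<subseteq> sums_of H" "e \<in> sums_of H"
  shows "idiff hs g e = idiff hs g' e"
  using assms(2,3)
  by (induction hs arbitrary: e) (simp_all add: fdiff_def assms(1) sums_of_add_closed)

lemma idiff_Cons_additive:
  assumes "diffs_vanish D (Suc (Suc (length hs))) f" "a \<in> D" "b \<in> D" "set hs \<subseteq> D"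
  shows "idiff ((a + b) # hs) f x = idiff (a # hs) f x + idiff (b # hs) f x"
  using idiff_Cons_add[of a b hs f x] diffs_vanishD[OF assms(1), of "a # b # hs" x] assms(2-4)
  by simp

lemma idiff_shift_telescope:
  assumes vanish: "diffs_vanish (sums_of H) (Suc (length cs)) g"
    and cs: "set cs \<subseteq> sums_of H" and e: "e \<in> sums_of H" and k: "k \<in> sums_of H"
  shows "idiff (map ((+) (e + k)) cs) g y - idiff (map ((+) e) cs) g y =
    (\<Sum>i<length cs. idiff (map ((+) e) (take i (map ((+) k) cs) @ drop (Suc i) cs)) (fdiff k g) y)"
proof -
  \<comment> \<open>a i has its first i slots shifted by k; by additivity each further shift
    contributes the difference with that slot replaced by k.\<close>
  define a where "a i = idiff (take i (map ((+) (e + k)) cs) @ drop i (map ((+) e) cs)) g y" for i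
  have "a (Suc i) - a i =
      idiff (map ((+) e) (take i (map ((+) k) cs) @ drop (Suc i) cs)) (fdiff k g) y"
    if i: "i < length cs" for i
  proof -
    define hs where "hs = map ((+) e) (take i (map ((+) k) cs) @ drop (Suc i) cs)"
    define c where "c = cs ! i"
    have c_in: "c \<in> sums_of H" using cs i by (auto simp: c_def)
    have hs_in: "set hs \<subseteq> sums_of H"
      using cs e k by (auto simp: hs_def intro!: sums_of_add_closed dest!: in_set_takeD in_set_dropD)
    have shift: "map ((+) e) (take i (map ((+) k) cs)) = take i (map ((+) (e + k)) cs)"
      by (simp add: take_map add.assoc)
    have len: "Suc (Suc (length hs)) = Suc (length cs)" using i by (simp add: hs_def)
    have "a (Suc i) = idiff ((e + c + k) # hs) g y"
      unfolding a_def
      by (rule idiff_perm)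
        (simp add: i c_def hs_def shift take_Suc_conv_app_nth drop_map add_ac)
    moreover have "a i = idiff ((e + c) # hs) g y"
      unfolding a_def
      by (rule idiff_perm)
        (simp add: c_def hs_def shift drop_map Cons_nth_drop_Suc[OF i, symmetric] add_ac)
    moreover have "idiff ((e + c + k) # hs) g y = idiff ((e + c) # hs) g y + idiff (k # hs) g y"
      using vanish e c_in k hs_in len by (intro idiff_Cons_additive) (simp_all add: sums_of_add_closed)
    moreover have "idiff (k # hs) g y = idiff hs (fdiff k g) y"
      by (simp only: idiff_Cons_eq_idiff_fdiff)
    ultimately show ?thesis
      unfolding hs_def[symmetric] by (metis add_diff_cancel_left')
  qed
  then have "(\<Sum>i<length cs. idiff (map ((+) e) (take i (map ((+) k) cs) @ drop (Suc i) cs)) (fdiff k g) y)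
      = (\<Sum>i<length cs. a (Suc i) - a i)"
    by simp
  also have "\<dots> = a (length cs) - a 0"
    by (rule sum_lessThan_telescope)
  finally show ?thesis by (simp add: a_def)
qed

lemma idiff_shifted_idiff:
  assumes "vector_space sc"
    and "diffs_vanish (sums_of H) (Suc (length ks)) g"
    and "set ks \<subseteq> sums_of H" "set cs \<subseteq> sums_of H" "length cs = length ks" "e \<in> sums_of H"
  shows "idiff ks (\<lambda>e. idiff (map ((+) e) cs) g y) e = sc (of_nat (fact (length ks))) (idiff ks g y)"
  using assms(2-)
proof (induction ks arbitrary: cs g rule: rev_induct)
  case Nil
  interpret vector_space sc by fact
  show ?case using Nil.prems by simp
next
  case (snoc k ks)
  interpret vector_space sc by fact
  define F where "F i = take i (map ((+) k) cs) @ drop (Suc i) cs" for i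
  have k: "k \<in> sums_of H" and ks: "set ks \<subseteq> sums_of H"
    using snoc.prems by auto
  have F_in: "set (F i) \<subseteq> sums_of H" for i
    using snoc.prems k
    by (auto simp: F_def intro!: sums_of_add_closed dest!: in_set_takeD in_set_dropD)
  have F_len: "length (F i) = length ks" if "i < length cs" for i
    using that snoc.prems by (simp add: F_def)
  have vanish_k: "diffs_vanish (sums_of H) (Suc (length ks)) (fdiff k g)"
    using snoc.prems(1) k by (intro diffs_vanish_fdiff) simp_all
  have "idiff (ks @ [k]) (\<lambda>e. idiff (map ((+) e) cs) g y) e =
      idiff ks (fdiff k (\<lambda>e. idiff (map ((+) e) cs) g y)) e"
    by (simp add: idiff_append)
  also have "\<dots> = idiff ks (\<lambda>e. \<Sum>i<length cs. idiff (map ((+) e) (F i)) (fdiff k g) y) e"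
  proof (rule idiff_cong_sums_of[OF _ ks snoc.prems(5)])
    fix e' assume "e' \<in> sums_of H"
    then show "fdiff k (\<lambda>e. idiff (map ((+) e) cs) g y) e' =
        (\<Sum>i<length cs. idiff (map ((+) e') (F i)) (fdiff k g) y)"
      using idiff_shift_telescope[of H cs g e' k y] snoc.prems k by (simp add: fdiff_def F_def)
  qed
  also have "\<dots> = (\<Sum>i<length cs. idiff ks (\<lambda>e. idiff (map ((+) e) (F i)) (fdiff k g) y) e)"
    by (rule idiff_sum)
  also have "\<dots> = (\<Sum>i<length cs. sc (of_nat (fact (length ks))) (idiff ks (fdiff k g) y))"
    using snoc.IH[OF vanish_k ks F_in F_len snoc.prems(5)] by simp
  also have "\<dots> = sc (of_nat (fact (length (ks @ [k])))) (idiff (ks @ [k]) g y)"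
    using snoc.prems(4) by (simp add: idiff_append scale_sum_left[symmetric] algebra_simps)
  finally show ?case .
qed

lemma diffs_vanish_sums_of_step_down:
  fixes sc :: "rat \<Rightarrow> 'b::ab_group_add \<Rightarrow> 'b" and f :: "'a::ab_group_add \<Rightarrow> 'b"
  assumes sc: "vector_space sc"
    and vanish: "diffs_vanish (sums_of H) (Suc d) f"
    and powers: "\<And>h x. idiff (replicate d h) f x = 0"
  shows "diffs_vanish (sums_of H) d f"
  unfolding diffs_vanish_def
proof (intro allI impI)
  interpret vector_space sc by fact
  fix ks x assume ks: "set ks \<subseteq> sums_of H" and len: "length ks = d"
  have "idiff ks (\<lambda>e. idiff (map ((+) e) (replicate d 0)) f x) 0 =
      sc (of_nat (fact (length ks))) (idiff ks f x)"
    using vanish ks len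
    by (intro idiff_shifted_idiff[OF sc]) (simp_all add: set_replicate_conv_if sums_of.zero)
  then have "sc (of_nat (fact d)) (idiff ks f x) = idiff ks (\<lambda>e. idiff (replicate d e) f x) 0"
    by (simp add: len)
  also have "\<dots> = 0"
    using powers by simp
  finally show "idiff ks f x = 0" by simp
qed

lemma pigeonhole_count:
  assumes "finite A" "set xs \<subseteq> A" "card A * n < length xs"
  shows "\<exists>a. n < count (mset xs) a"
proof (rule ccontr)
  assume "\<nexists>a. n < count (mset xs) a"
  then have "sum (count_list xs) A \<le> card A * n"
    using sum_bounded_above[of A "count_list xs" n] by (simp add: not_less count_mset)
  then show False
    using assms sum_count_set[of xs A] by simp
qed

lemma diffs_vanish_pigeonhole:
  assumes "finite H" and powers: "\<And>h x. idiff (replicate s h) f x = 0"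
  shows "diffs_vanish H (Suc (card H * s)) f"
  unfolding diffs_vanish_def
proof (intro allI impI)
  fix hs x assume "set hs \<subseteq> H" "length hs = Suc (card H * s)"
  then obtain h where "s < count (mset hs) h"
    using pigeonhole_count[OF \<open>finite H\<close>] by fastforce
  then have "replicate_mset s h \<subseteq># mset hs"
    by (simp flip: count_le_replicate_mset_subset_eq)
  moreover obtain rest where "mset rest = mset hs - replicate_mset s h"
    using ex_mset by blast
  ultimately have "idiff hs f x = idiff (rest @ replicate s h) f x"
    by (intro idiff_perm) simp
  also have "\<dots> = idiff rest (idiff (replicate s h) f) x"
    by (simp add: idiff_append)
  also have "idiff (replicate s h) f = (\<lambda>_. 0)"
    using powers by (simp add: fun_eq_iff)
  finally show "idiff hs f x = 0" by simp
qed

lemma diffs_vanish_if_powers_vanish: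
  fixes sc :: "rat \<Rightarrow> 'b::ab_group_add \<Rightarrow> 'b" and f :: "'a::ab_group_add \<Rightarrow> 'b"
  assumes sc: "vector_space sc" and powers: "\<And>h x. idiff (replicate s h) f x = 0"
  shows "diffs_vanish UNIV s f"
  unfolding diffs_vanish_def
proof (intro allI impI)
  fix hs :: "'a list" and x assume "length hs = s"
  define N where "N = Suc (card (set hs) * s)"
  have "diffs_vanish (sums_of (set hs)) s f"
  proof (rule inc_induct[of s N])
    show "s \<le> N"
    proof (cases "hs = []")
      case False
      then have "1 * s \<le> card (set hs) * s"
        by (intro mult_le_mono1) (simp add: Suc_le_eq card_gt_0_iff)
      then show ?thesis unfolding N_def by linarith
    qed (use \<open>length hs = s\<close> in \<open>simp add: N_def\<close>)
    show "diffs_vanish (sums_of (set hs)) N f"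
      unfolding N_def by (intro diffs_vanish_sums_of diffs_vanish_pigeonhole powers) simp
  next
    fix d assume "s \<le> d" "diffs_vanish (sums_of (set hs)) (Suc d) f"
    moreover have "idiff (replicate d h) f y = 0" for h y
      using diffs_vanish_le[of "{h}" s f "replicate d h"] powers \<open>s \<le> d\<close>
      by (simp add: diffs_vanish_singleton set_replicate_conv_if)
    ultimately show "diffs_vanish (sums_of (set hs)) d f"
      using diffs_vanish_sums_of_step_down[OF sc] by blast
  qed
  then show "idiff hs f x = 0"
    using subset_sums_of \<open>length hs = s\<close> by (auto intro: diffs_vanishD)
qed

lemma nonneg_eq_of_nat_mult_in_interval:
  fixes h \<delta> :: real
  assumes "0 \<le> h" "0 < \<delta>"
  obtains a n where "a \<in> {0<..<\<delta>}" "h = of_nat n * a"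
proof (cases "h = 0")
  case True
  then show ?thesis using that[of "\<delta> / 2" 0] assms(2) by simp
next
  case False
  obtain n where n: "h / \<delta> < of_nat n"
    using reals_Archimedean2 by blast
  moreover have "0 \<le> h / \<delta>"
    using assms by simp
  ultimately have "0 < real n"
    by linarith
  moreover have "h < of_nat n * \<delta>"
    using n assms(2) by (simp add: field_simps)
  ultimately show ?thesis
    using that[of "h / of_nat n" n] assms False by (simp add: field_simps)
qed

lemma powers_vanish_if_powers_vanish_on_interval:
  fixes f :: "real \<Rightarrow> 'b::ab_group_add"
  assumes "0 < \<delta>" and powers: "\<And>h x. h \<in> {0<..<\<delta>} \<Longrightarrow> idiff (replicate s h) f x = 0"
  shows "idiff (replicate s h) f x = 0"
proof -
  have nonneg: "diffs_vanish {h} s f" if "0 \<le> h" for h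
  proof -
    obtain a n where a: "a \<in> {0<..<\<delta>}" and h: "h = of_nat n * a"
      using nonneg_eq_of_nat_mult_in_interval[OF \<open>0 \<le> h\<close> \<open>0 < \<delta>\<close>] .
    have "diffs_vanish (sums_of {a}) s f"
      using powers[OF a] by (intro diffs_vanish_sums_of) (simp add: diffs_vanish_singleton)
    then show ?thesis
      by (rule diffs_vanish_subset) (simp add: h of_nat_mult_in_sums_of)
  qed
  have "diffs_vanish {h} s f"
  proof (cases "0 \<le> h")
    case False
    then have "diffs_vanish (uminus ` {- h}) s f"
      using nonneg[of "- h"] by (intro diffs_vanish_uminus) simp
    then show ?thesis by simp
  qed (rule nonneg)
  then show ?thesis by (simp add: diffs_vanish_singleton)
qed

theorem theorem3:
  fixes sc :: "rat \<Rightarrow> 'b::ab_group_add \<Rightarrow> 'b"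
    and f :: "real \<Rightarrow> 'b" and s :: nat and \<delta> :: real
  assumes "vector_space sc"
    and "s \<ge> 1" and "\<delta> > 0"
  shows "((\<forall>x. \<forall>h\<in>{-\<delta><..<0}. pdiff sc s h f x = 0)
            \<longrightarrow> (\<forall>x hs. length hs = s \<longrightarrow> idiff hs f x = 0))
       \<and> ((\<forall>x. \<forall>h\<in>{0<..<\<delta>}. pdiff sc s h f x = 0)
            \<longrightarrow> (\<forall>x hs. length hs = s \<longrightarrow> idiff hs f x = 0))"
proof -
  have all_diffs: "\<forall>x hs. length hs = s \<longrightarrow> idiff hs f x = 0"
    if "\<And>h x. h \<in> {0<..<\<delta>} \<Longrightarrow> idiff (replicate s h) f x = 0"
  proof -
    have "diffs_vanish UNIV s f"
      using powers_vanish_if_powers_vanish_on_interval[OF assms(3) that]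
      by (rule diffs_vanish_if_powers_vanish[OF assms(1)])
    then show ?thesis by (simp add: diffs_vanish_def)
  qed
  show ?thesis
  proof (intro conjI impI)
    assume "\<forall>x. \<forall>h\<in>{-\<delta><..<0}. pdiff sc s h f x = 0"
    then have "diffs_vanish (uminus ` {- h}) s f" if "h \<in> {0<..<\<delta>}" for h
      using that by (intro diffs_vanish_uminus)
        (simp add: diffs_vanish_singleton pdiff_eq_idiff[OF assms(1), symmetric])
    then show "\<forall>x hs. length hs = s \<longrightarrow> idiff hs f x = 0"
      by (intro all_diffs) (simp add: diffs_vanish_singleton)
  next
    assume "\<forall>x. \<forall>h\<in>{0<..<\<delta>}. pdiff sc s h f x = 0"
    then show "\<forall>x hs. length hs = s \<longrightarrow> idiff hs f x = 0"
      by (intro all_diffs) (simp add: pdiff_eq_idiff[OF assms(1)])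
  qed
qed

end
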